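(* Let $q$ be a prime power. The graph $H_q$ is a $d$-regular graph on $n$ vertices, where (i) $n=q^2(q^2-q+1)=q^4-q^3+q^2$ and $d=(q+1)(q^2-1)=q^3+q^2-q-1$; (ii) the family $\mathcal C$ consists of $q^3+1$ maximal cliques of $H_q$, each of order $q^2$, and every two distinct members of $\mathcal C$ share exactly one vertex; (iii) each vertex of $H_q$ lies in exactly $q+1$ cliques of $\mathcal C$; (iv) every copy of $K_4$ in $H_q$ has at least three of its vertices in some single clique of $\mathcal C$.
   Context: $\mathrm{PG}(2,q^2)$ is the projective plane over $\mathbb F_{q^2}$ (points: one-dimensional subspaces of $\mathbb F_{q^2}^3$; lines: two-dimensional subspaces). The Hermitian unital is $\mathcal H=\{\langle x,y,z\rangle : x^{q+1}+y^{q+1}+z^{q+1}=0\}$, a set of $q^3+1$ points such that every line meets $\mathcal H$ in $1$ or $q+1$ points; lines meeting it in $q+1$ points are called secants. $H_q$ is the graph whose vertex set is the set of secants of $\mathcal H$, two distinct secants being adjacent iff their intersection point lies in $\mathcal H$. For each point $P\in\mathcal H$ let $C_P$ be the set of secants through $P$, and let $\mathcal C=\{C_P: P\in\mathcal H\}$ (each $C_P$ is a clique of $H_q$). *)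

theory Defs
  imports "HOL-Computational_Algebra.Primes"
begin

text \<open>Vectors of F^3 are triples; points of PG(2,F) are one-dimensional subspaces,
lines are two-dimensional subspaces, both represented as sets of vectors.\<close>

type_synonym 'a vec3 = "'a \<times> 'a \<times> 'a"

definition zero3 :: "'a::field vec3" where
  "zero3 = (0, 0, 0)"

definition lincomb :: "'a::field \<Rightarrow> 'a vec3 \<Rightarrow> 'a \<Rightarrow> 'a vec3 \<Rightarrow> 'a vec3" where
  "lincomb a u b w = (case u of (u1, u2, u3) \<Rightarrow> case w of (w1, w2, w3) \<Rightarrow>
      (a * u1 + b * w1, a * u2 + b * w2, a * u3 + b * w3))"

definition lin_indep2 :: "'a::field vec3 \<Rightarrow> 'a vec3 \<Rightarrow> bool" where
  "lin_indep2 u w \<longleftrightarrow> (\<forall>a b. lincomb a u b w = zero3 \<longrightarrow> a = 0 \<and> b = 0)"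

definition span1 :: "'a::field vec3 \<Rightarrow> 'a vec3 set" where
  "span1 v = {lincomb c v 0 zero3 | c. True}"

definition span2 :: "'a::field vec3 \<Rightarrow> 'a vec3 \<Rightarrow> 'a vec3 set" where
  "span2 u w = {lincomb a u b w | a b. True}"

definition PG_points :: "'a::{field,finite} vec3 set set" where
  "PG_points = {span1 v | v. v \<noteq> zero3}"

definition PG_lines :: "'a::{field,finite} vec3 set set" where
  "PG_lines = {span2 u w | u w. lin_indep2 u w}"

definition herm :: "nat \<Rightarrow> 'a::field vec3 \<Rightarrow> 'a" where
  "herm q v = (case v of (x, y, z) \<Rightarrow> x ^ (q + 1) + y ^ (q + 1) + z ^ (q + 1))"

definition unital :: "nat \<Rightarrow> 'a::{field,finite} vec3 set set" where
  "unital q = {P \<in> PG_points. \<exists>v \<in> P. v \<noteq> zero3 \<and> herm q v = 0}"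

text \<open>Point P lies on line L iff P is a subspace of L.\<close>
definition secants :: "nat \<Rightarrow> 'a::{field,finite} vec3 set set" where
  "secants q = {L \<in> PG_lines. card {P \<in> unital q. P \<subseteq> L} = q + 1}"

definition Hadj :: "nat \<Rightarrow> 'a::{field,finite} vec3 set \<Rightarrow> 'a vec3 set \<Rightarrow> bool" where
  "Hadj q L M \<longleftrightarrow> L \<in> secants q \<and> M \<in> secants q \<and> L \<noteq> M \<and> L \<inter> M \<in> unital q"

definition clique_at :: "nat \<Rightarrow> 'a::{field,finite} vec3 set \<Rightarrow> 'a vec3 set set" where
  "clique_at q P = {L \<in> secants q. P \<subseteq> L}"

definition cliqueFamily :: "nat \<Rightarrow> 'a::{field,finite} vec3 set set set" where
  "cliqueFamily q = clique_at q ` unital q"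

definition is_clique :: "nat \<Rightarrow> 'a::{field,finite} vec3 set set \<Rightarrow> bool" where
  "is_clique q K \<longleftrightarrow> K \<subseteq> secants q \<and> (\<forall>L\<in>K. \<forall>M\<in>K. L \<noteq> M \<longrightarrow> Hadj q L M)"

definition is_maximal_clique :: "nat \<Rightarrow> 'a::{field,finite} vec3 set set \<Rightarrow> bool" where
  "is_maximal_clique q K \<longleftrightarrow> is_clique q K \<and>
     (\<forall>K'. is_clique q K' \<and> K \<subseteq> K' \<longrightarrow> K' = K)"

definition prime_power :: "nat \<Rightarrow> bool" where
  "prime_power q \<longleftrightarrow> (\<exists>p k. prime p \<and> k \<ge> 1 \<and> q = p ^ k)"

end

theory Submission
  imports Defs "HOL-Computational_Algebra.Polynomial"
begin

text \<open>
  Write \<open>conj x = x^q\<close> and \<open>fnorm x = x^(q+1)\<close> on \<open>GF(q\<^sup>2)\<close>; the trace \<open>x + conj x\<close> and the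
  norm map onto the subfield \<open>Fq\<close> with fibres of size \<open>q\<close> and \<open>q + 1\<close>. Every line is \<open>perp n\<close>,
  and counting zeros of the binary Hermitian form that \<open>herm\<close> induces on it shows that \<open>perp n\<close>
  meets the unital in \<open>1\<close> or \<open>q + 1\<close> points according as \<open>herm n\<close> vanishes or not. Counting
  isotropic and non-isotropic vectors gives the numbers of points and secants; two points of the
  unital span a secant and two secants meet in one point, which yields the clique structure.

  For the \<open>K\<^sub>4\<close> statement, take four pairwise adjacent secants with normals \<open>a, b, c, d\<close>, no
  three through a common point of the unital. The six cross products are isotropic, and the
  points \<open>d \<times> a, d \<times> b, d \<times> c\<close> lie on the sides of the triangle \<open>b \<times> c, c \<times> a, a \<times> b\<close>. On each
  side the Hermitian form forces a trace-zero condition; multiplying the three gives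
  \<open>P + conj P = 0\<close> for the product \<open>P\<close> of the Hermitian products of the three vertices,
  while a Gram determinant identity gives \<open>P + conj P = fnorm \<Delta> \<noteq> 0\<close>, where \<open>\<Delta>\<close> is the
  determinant of the vertices.
\<close>

lemma card_eq_sum_card_fibers:
  assumes "finite A" "finite B" "f ` A \<subseteq> B"
  shows "card A = (\<Sum>b\<in>B. card {a\<in>A. f a = b})"
  using sum.group[OF assms, of "\<lambda>_. 1::nat"] by simp

lemma card_fibers_tight:
  assumes "finite A" "finite B" "f ` A \<subseteq> B"
    and fiber_le: "\<And>b. b \<in> B \<Longrightarrow> card {a\<in>A. f a = b} \<le> k"
    and "card B \<le> m" "card A = m * k" "k > 0"
  shows "card B = m \<and> (\<forall>b\<in>B. card {a\<in>A. f a = b} = k)"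
proof -
  have sum_eq: "(\<Sum>b\<in>B. card {a\<in>A. f a = b}) = m * k"
    using card_eq_sum_card_fibers[OF assms(1-3)] assms(6) by simp
  have "(\<Sum>b\<in>B. card {a\<in>A. f a = b}) \<le> card B * k"
    using sum_mono[of B _ "\<lambda>_. k", OF fiber_le] by simp
  hence card_B: "card B = m"
    using sum_eq assms(5,7) by simp
  have "card {a\<in>A. f a = b} = k" if "b \<in> B" for b
  proof (rule ccontr)
    assume "card {a\<in>A. f a = b} \<noteq> k"
    hence "card {a\<in>A. f a = b} < k" using fiber_le[OF that] by simp
    hence "(\<Sum>b\<in>B. card {a\<in>A. f a = b}) < (\<Sum>b\<in>B. k)"
      by (intro sum_strict_mono_ex1) (use assms that fiber_le in auto)
    thus False using sum_eq card_B by simp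
  qed
  thus ?thesis using card_B by simp
qed

lemma card_roots_binomial_le:
  fixes c d :: "'a::field"
  assumes "n > 1"
  shows "card {x. x ^ n + d * x = c} \<le> n"
proof -
  let ?p = "monom 1 n + [:- c, d:]"
  have deg: "degree ?p = n" using assms
    by (subst degree_add_eq_left) (auto simp: degree_monom_eq)
  hence "card {x. poly ?p x = 0} \<le> n"
    using card_poly_roots_bound[of ?p] assms by fastforce
  moreover have "{x. poly ?p x = 0} = {x. x ^ n + d * x = c}"
    by (auto simp: poly_monom algebra_simps)
  ultimately show ?thesis by simp
qed

lemma card_pairs_eq_sum:
  fixes P :: "'b::finite \<Rightarrow> 'c::finite \<Rightarrow> bool"
  shows "card {(s,t). P s t} = (\<Sum>t\<in>UNIV. card {s. P s t})"
proof -
  have "{(s,t). P s t} = (\<Union>t\<in>UNIV. (\<lambda>s. (s,t)) ` {s. P s t})" by auto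
  also have "card \<dots> = (\<Sum>t\<in>UNIV. card ((\<lambda>s. (s,t)) ` {s. P s t}))"
    by (rule card_UN_disjoint) auto
  also have "\<dots> = (\<Sum>t\<in>UNIV. card {s. P s t})"
    by (intro sum.cong refl card_image) (auto simp: inj_on_def)
  finally show ?thesis .
qed

lemma card_image_eq_if_same_kernel:
  assumes "finite S" "\<And>x y. x \<in> S \<Longrightarrow> y \<in> S \<Longrightarrow> f x = f y \<longleftrightarrow> g x = g y"
  shows "card (f ` S) = card (g ` S)"
proof -
  define h where "h = (\<lambda>P. g (SOME x. x \<in> S \<and> f x = P))"
  have hf: "h (f x) = g x" if "x \<in> S" for x
  proof -
    have "\<exists>y. y \<in> S \<and> f y = f x" using that by blast
    hence "(SOME y. y \<in> S \<and> f y = f x) \<in> S \<and> f (SOME y. y \<in> S \<and> f y = f x) = f x"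
      by (rule someI_ex)
    thus ?thesis unfolding h_def using assms(2) that by blast
  qed
  have "g ` S = h ` f ` S"
  proof
    show "g ` S \<subseteq> h ` f ` S" using hf by (auto simp: image_iff)
    show "h ` f ` S \<subseteq> g ` S" using hf by auto
  qed
  moreover have "inj_on h (f ` S)" by (auto simp: inj_on_def hf assms(2))
  ultimately show ?thesis by (simp add: card_image)
qed
section \<open>The field of order \<open>q\<^sup>2\<close> and its conjugation\<close>

locale hermitian_field =
  fixes q :: nat and ty :: "'a::{field,finite} itself"
  assumes prime_power_q: "prime_power q"
    and card_field: "card (UNIV :: 'a set) = q ^ 2"
begin

lemma q_ge_2: "q \<ge> 2"
proof -
  obtain p k where "prime p" "k \<ge> 1" "q = p ^ k"
    using prime_power_q unfolding prime_power_def by blast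
  moreover have "p \<ge> 2" using \<open>prime p\<close> prime_ge_2_nat by blast
  ultimately show ?thesis using self_le_power[of p k] by simp
qed

lemma q_squared_ge_4: "q^2 \<ge> 4"
  using mult_le_mono[OF q_ge_2 q_ge_2] by (simp add: power2_eq_square)

lemma of_nat_card_field: "of_nat (card (UNIV :: 'a set)) = (0::'a)"
proof -
  have "(\<Sum>y\<in>(UNIV::'a set). y + 1) = (\<Sum>y\<in>UNIV. y)"
    by (rule sum.reindex_bij_witness[of _ "\<lambda>y. y - 1" "\<lambda>y. y + 1"]) auto
  thus ?thesis by (simp add: sum.distrib)
qed

lemma prime_CHAR: "prime CHAR('a)"
  using prime_CHAR_semidom[where ?'a = 'a] finite_imp_CHAR_pos[where ?'a = 'a] by auto

lemma q_power_of_CHAR: "\<exists>k. q = CHAR('a) ^ k"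
proof -
  obtain p k where pk: "prime p" "q = p ^ k"
    using prime_power_q unfolding prime_power_def by blast
  have "CHAR('a) dvd q ^ 2"
    using of_nat_card_field card_field by (simp only: of_nat_eq_0_iff_char_dvd)
  hence "CHAR('a) dvd p" using prime_CHAR pk prime_dvd_power by (metis power_mult)
  hence "CHAR('a) = p" using prime_CHAR pk(1) by (simp add: primes_dvd_imp_eq)
  thus ?thesis using pk by auto
qed

lemma power_card_field: "(x::'a) ^ card (UNIV :: 'a set) = x"
proof (cases "x = 0")
  case False
  have "x * (\<Prod>y\<in>UNIV-{0}. x * y) = x * x ^ (card (UNIV :: 'a set) - 1) * \<Prod>(UNIV-{0})"
    by (simp add: prod.distrib mult_ac)
  also have "x * x ^ (card (UNIV :: 'a set) - 1) = x ^ card (UNIV :: 'a set)"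
    using finite_UNIV_card_ge_0[where ?'a = 'a] by (simp add: power_eq_if)
  also have "(\<Prod>y\<in>UNIV-{0}. x * y) = (\<Prod>y\<in>UNIV-{0}. y)"
    by (rule prod.reindex_bij_witness[of _ "\<lambda>y. y / x" "\<lambda>y. x * y"]) (use False in auto)
  finally show ?thesis by simp
qed (use finite_UNIV_card_ge_0[where ?'a = 'a] in auto)

definition conj :: "'a \<Rightarrow> 'a" where "conj x = x ^ q"

lemma conj_add: "conj (x + y) = conj x + conj y"
  using q_power_of_CHAR freshmans_dream'[OF prime_CHAR] unfolding conj_def by blast

lemma conj_mult: "conj (x * y) = conj x * conj y"
  unfolding conj_def by (simp add: power_mult_distrib)

lemma conj_zero [simp]: "conj 0 = 0" unfolding conj_def using q_ge_2 by simp
lemma conj_one [simp]: "conj 1 = 1" unfolding conj_def by simp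

lemma conj_minus: "conj (- x) = - conj x"
  using conj_add[of x "-x"] neg_eq_iff_add_eq_0[of "conj x" "conj (-x)"] by simp

lemma conj_diff: "conj (x - y) = conj x - conj y"
  using conj_add[of x "-y"] conj_minus by simp

lemma conj_conj [simp]: "conj (conj x) = x"
  unfolding conj_def using power_card_field[of x] card_field
  by (simp add: power_mult[symmetric] power2_eq_square)

lemma conj_eq_0_iff [simp]: "conj x = 0 \<longleftrightarrow> x = 0" by (metis conj_conj conj_zero)

lemma conj_divide: "conj (x / y) = conj x / conj y" unfolding conj_def by (simp add: power_divide)

definition fnorm :: "'a \<Rightarrow> 'a" where "fnorm x = x * conj x"

lemma power_Suc_q: "x ^ (q + 1) = fnorm x"
  unfolding fnorm_def conj_def by (simp add: mult.commute)

lemma conj_fnorm: "conj (fnorm x) = fnorm x" unfolding fnorm_def by (simp add: conj_mult mult.commute)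
lemma fnorm_mult: "fnorm (x * y) = fnorm x * fnorm y" unfolding fnorm_def by (simp add: conj_mult mult_ac)
lemma fnorm_eq_0_iff [simp]: "fnorm x = 0 \<longleftrightarrow> x = 0" unfolding fnorm_def by simp
lemma fnorm_conj: "fnorm (conj x) = fnorm x" unfolding fnorm_def by (simp add: mult.commute)
lemma fnorm_zero [simp]: "fnorm 0 = 0" unfolding fnorm_def by simp
lemma fnorm_one [simp]: "fnorm 1 = 1" unfolding fnorm_def by simp
lemma fnorm_minus [simp]: "fnorm (- x) = fnorm x" unfolding fnorm_def by (simp add: conj_minus)
lemma fnorm_divide: "fnorm (x / y) = fnorm x / fnorm y" unfolding fnorm_def by (simp add: conj_divide)

definition Fq :: "'a set" where "Fq = {x. conj x = x}"

lemma card_Fq_le: "card Fq \<le> q"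
proof -
  have "{x::'a. x ^ q + (-1) * x = 0} = Fq" by (auto simp: Fq_def conj_def)
  thus ?thesis using card_roots_binomial_le[of q "-1::'a" 0] q_ge_2 by simp
qed

text \<open>The trace \<open>x + conj x\<close> maps the \<open>q\<^sup>2\<close> field elements into the at most \<open>q\<close> elements
  of \<open>Fq\<close> with fibres of size at most \<open>q\<close>, so everything is tight.\<close>

lemma card_Fq_and_trace_fibers: "card Fq = q \<and> (\<forall>c\<in>Fq. card {x. x + conj x = c} = q)"
proof -
  have "card Fq = q \<and> (\<forall>c\<in>Fq. card {x\<in>UNIV. x + conj x = c} = q)"
  proof (rule card_fibers_tight)
    show "(\<lambda>x. x + conj x) ` UNIV \<subseteq> Fq" by (auto simp: Fq_def conj_add add.commute)
    fix c :: 'a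
    have "{x::'a. x ^ q + 1 * x = c} = {x \<in> UNIV. x + conj x = c}"
      by (auto simp: conj_def add.commute)
    thus "card {x \<in> UNIV. x + conj x = c} \<le> q"
      using card_roots_binomial_le[of q 1 c] q_ge_2 by simp
  qed (use card_Fq_le card_field q_ge_2 in \<open>auto simp: power2_eq_square\<close>)
  thus ?thesis by simp
qed

lemma card_Fq: "card Fq = q" using card_Fq_and_trace_fibers by simp

lemma card_trace_zero: "card {x. x + conj x = 0} = q"
  using card_Fq_and_trace_fibers by (simp add: Fq_def)

lemma card_fnorm_fiber:
  assumes "c \<in> Fq"
  shows "card {x. fnorm x = c} = (if c = 0 then 1 else q + 1)"
proof (cases "c = 0")
  case False
  have "card (Fq - {0}) = q - 1 \<and> (\<forall>c\<in>Fq - {0}. card {x\<in>UNIV - {0}. fnorm x = c} = q + 1)"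
  proof (rule card_fibers_tight)
    show "fnorm ` (UNIV - {0}) \<subseteq> Fq - {0}" by (auto simp: Fq_def conj_fnorm)
    fix c :: 'a
    have "{x\<in>UNIV - {0}. fnorm x = c} \<subseteq> {x::'a. x ^ (q+1) + 0 * x = c}"
      using power_Suc_q by auto
    hence "card {x\<in>UNIV - {0}. fnorm x = c} \<le> card {x::'a. x ^ (q+1) + 0 * x = c}"
      by (intro card_mono) auto
    also have "\<dots> \<le> q + 1"
      using q_ge_2 by (intro card_roots_binomial_le) auto
    finally show "card {x\<in>UNIV - {0}. fnorm x = c} \<le> q + 1" .
  next
    show "card (Fq - {0}) \<le> q - 1" using card_Fq by (simp add: Fq_def)
  next
    have "card (UNIV - {0::'a}) = q^2 - 1" using card_field by (simp add: card_Diff_singleton)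
    thus "card (UNIV - {0::'a}) = (q - 1) * (q + 1)"
      by (simp add: power2_eq_square algebra_simps diff_mult_distrib)
  qed auto
  moreover have "{x\<in>UNIV - {0}. fnorm x = c} = {x. fnorm x = c}" using False by auto
  ultimately show ?thesis using assms False by (metis DiffI singletonD)
qed simp

end

section \<open>Zeros of binary Hermitian forms\<close>

context hermitian_field
begin

definition binary_form :: "'a \<Rightarrow> 'a \<Rightarrow> 'a \<Rightarrow> 'a \<Rightarrow> 'a \<Rightarrow> 'a" where
  "binary_form al ga be s t = al * fnorm s + ga * fnorm t + be * s * conj t + conj be * conj s * t"

lemma binary_form_complete_square:
  assumes "al \<noteq> 0" "conj al = al"
  shows "binary_form al ga be s t
    = al * (fnorm (s + conj be * t / al) - fnorm t * ((fnorm be - al * ga) / al^2))"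
  using assms unfolding binary_form_def fnorm_def
  by (simp add: conj_add conj_mult conj_divide field_simps power2_eq_square)

lemma sum_if_zero:
  "(\<Sum>t\<in>(UNIV::'a set). if t = 0 then a else b) = a + (q^2 - 1) * (b::nat)"
proof -
  have "(\<Sum>t\<in>(UNIV::'a set). if t = 0 then a else b) = a + (\<Sum>t\<in>UNIV - {0::'a}. b)"
    by (subst sum.remove[of _ 0]) (auto intro!: sum.cong)
  thus ?thesis using card_field by (simp add: card_Diff_singleton)
qed

lemma card_translate_fnorm_fiber: "card {s. fnorm (s + d) = c} = card {x. fnorm x = c}"
proof -
  have "{s. fnorm (s + d) = c} = (\<lambda>x. x - d) ` {x. fnorm x = c}"
    by (auto simp: image_iff) (metis add_diff_cancel)
  thus ?thesis by (simp add: card_image inj_on_def)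
qed

text \<open>For fixed \<open>t\<close>, completing the square leaves a norm equation in \<open>s\<close>.\<close>

lemma card_binary_form_zeros_anisotropic:
  assumes "al \<noteq> 0" "al \<in> Fq" "ga \<in> Fq"
  shows "card {(s,t). binary_form al ga be s t = 0} =
           (if al * ga - fnorm be = 0 then q^2 else q^3 + q^2 - q)"
proof -
  define e where "e = (fnorm be - al * ga) / al^2"
  have conj_al: "conj al = al" using assms by (simp add: Fq_def)
  have e_Fq: "fnorm t * e \<in> Fq" for t
    using assms unfolding e_def Fq_def
    by (simp add: conj_divide conj_diff conj_mult conj_fnorm power2_eq_square)
  have fiber: "card {s. binary_form al ga be s t = 0} = (if fnorm t * e = 0 then 1 else q + 1)" for t
  proof -
    have "{s. binary_form al ga be s t = 0} = {s. fnorm (s + conj be * t / al) = fnorm t * e}"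
      using binary_form_complete_square[OF assms(1) conj_al] assms(1) by (auto simp: e_def)
    thus ?thesis using card_fnorm_fiber[OF e_Fq] by (simp add: card_translate_fnorm_fiber)
  qed
  have "card {(s,t). binary_form al ga be s t = 0}
      = (\<Sum>t\<in>UNIV. if fnorm t * e = 0 then 1 else q + 1)"
    by (simp add: card_pairs_eq_sum fiber)
  moreover have "e = 0 \<longleftrightarrow> al * ga - fnorm be = 0"
    unfolding e_def using assms(1) by (auto simp: right_minus_eq)
  moreover obtain r where "q = r + 2" using q_ge_2 by (metis add.commute le_Suc_ex)
  hence "1 + (q^2 - 1) * (q + 1) = q^3 + q^2 - q"
    by (simp add: power2_eq_square power3_eq_cube algebra_simps)
  ultimately show ?thesis
    using card_field sum_if_zero[of 1 "q + 1"] by auto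
qed

lemma card_binary_form_zeros:
  assumes "al \<in> Fq" "ga \<in> Fq" "\<not> (al = 0 \<and> ga = 0 \<and> be = 0)"
  shows "card {(s,t). binary_form al ga be s t = 0} =
           (if al * ga - fnorm be = 0 then q^2 else q^3 + q^2 - q)"
proof -
  consider "al \<noteq> 0" | "al = 0" "ga \<noteq> 0" | "al = 0" "ga = 0" "be \<noteq> 0"
    using assms(3) by blast
  thus ?thesis
  proof cases
    case 1
    thus ?thesis using card_binary_form_zeros_anisotropic assms by blast
  next
    case 2
    have "{(s,t). binary_form al ga be s t = 0}
        = (\<lambda>(t,s). (s,t)) ` {(t,s). binary_form ga al (conj be) t s = 0}"
      using 2 by (auto simp: binary_form_def image_iff mult_ac add_ac)
    hence "card {(s,t). binary_form al ga be s t = 0}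
        = card {(t,s). binary_form ga al (conj be) t s = 0}"
      by (simp add: card_image inj_on_def)
    also have "\<dots> = (if ga * al - fnorm (conj be) = 0 then q^2 else q^3 + q^2 - q)"
      using card_binary_form_zeros_anisotropic[OF 2(2) assms(2,1)] by simp
    finally show ?thesis by (simp add: fnorm_conj mult.commute)
  next
    case 3
    text \<open>Now the form is the trace of \<open>be s conj t\<close>, which has \<open>q\<close> zeros \<open>s\<close> for each \<open>t \<noteq> 0\<close>.\<close>
    have fiber: "card {s. binary_form al ga be s t = 0} = (if t = 0 then q^2 else q)" for t
    proof (cases "t = 0")
      case True thus ?thesis using 3 card_field by (simp add: binary_form_def)
    next
      case False
      define b where "b = be * conj t"
      have b: "b \<noteq> 0" using 3 False by (simp add: b_def)
      have "binary_form al ga be s t = b * s + conj (b * s)" for s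
        using 3 by (simp add: binary_form_def b_def conj_mult mult_ac)
      hence "{s. binary_form al ga be s t = 0} = (\<lambda>x. x / b) ` {x. x + conj x = 0}"
        using b by (auto simp: image_iff) (metis nonzero_mult_div_cancel_left)
      thus ?thesis using b False card_trace_zero by (simp add: card_image inj_on_def)
    qed
    obtain r where "q = r + 2" using q_ge_2 by (metis add.commute le_Suc_ex)
    hence "q^2 + (q^2 - 1) * q = q^3 + q^2 - q"
      by (simp add: power2_eq_square power3_eq_cube algebra_simps)
    moreover have "card {(s,t). binary_form al ga be s t = 0}
        = (\<Sum>t\<in>(UNIV::'a set). if t = 0 then q^2 else q)"
      unfolding card_pairs_eq_sum fiber by simp
    ultimately show ?thesis using 3 sum_if_zero[of "q^2" q] by simp
  qed
qed

end

section \<open>Lines and points of the projective plane\<close>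

fun scale3 :: "'a::field \<Rightarrow> 'a vec3 \<Rightarrow> 'a vec3" where
  "scale3 c (x,y,z) = (c*x, c*y, c*z)"
fun dot :: "'a::field vec3 \<Rightarrow> 'a vec3 \<Rightarrow> 'a" where
  "dot (a,b,c) (x,y,z) = a*x + b*y + c*z"
fun cross :: "'a::field vec3 \<Rightarrow> 'a vec3 \<Rightarrow> 'a vec3" where
  "cross (a,b,c) (x,y,z) = (b*z - c*y, c*x - a*z, a*y - b*x)"
fun rot :: "'a vec3 \<Rightarrow> 'a vec3" where
  "rot (x,y,z) = (y,z,x)"
fun third :: "'a vec3 \<Rightarrow> 'a" where
  "third (x,y,z) = z"

definition perp :: "'a::field vec3 \<Rightarrow> 'a vec3 set" where
  "perp n = {v. dot n v = 0}"

lemma zero3_eq: "zero3 = (0,0,0)" by (simp add: zero3_def)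

lemma dot_zero3 [simp]: "dot n zero3 = 0" by (cases n) (simp add: zero3_eq)

lemma rot_rot_rot[simp]: "rot (rot (rot v)) = v" by (cases v) auto
lemma dot_rot[simp]: "dot (rot n) (rot v) = dot n v" by (cases n; cases v) (auto simp: algebra_simps)
lemma rot_zero[simp]: "rot v = zero3 \<longleftrightarrow> v = zero3" by (cases v) (auto simp: zero3_eq)
lemma rot_inj: "rot v = rot w \<longleftrightarrow> v = w" by (metis rot_rot_rot)

lemma card_Collect_rot:
  assumes "\<And>v. R (rot v) = R' v"
  shows "card {v. R v} = card {v::'a vec3. R' v}"
proof -
  have "{v. R v} = rot ` {v. R' v}" using assms by (auto simp: image_iff)
  thus ?thesis by (simp add: card_image inj_on_def rot_inj)
qed

lemma vec3_nonzero_wlog_third: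
  assumes "\<And>n. P (rot n) \<Longrightarrow> P n" "\<And>n. third n \<noteq> 0 \<Longrightarrow> P n" "n \<noteq> zero3"
  shows "P n"
proof -
  obtain a b c where n: "n = (a,b,c)" by (cases n)
  show ?thesis
  proof (cases "c \<noteq> 0")
    case True thus ?thesis using assms n by auto
  next
    case False
    show ?thesis
    proof (cases "a \<noteq> 0")
      case True
      hence "P (rot n)" using assms(2)[of "rot n"] n by (auto simp: zero3_eq)
      thus ?thesis using assms(1) by blast
    next
      case False
      hence "b \<noteq> 0" using \<open>\<not> c \<noteq> 0\<close> assms(3) n by (auto simp: zero3_eq)
      hence "P (rot (rot n))" using assms(2)[of "rot (rot n)"] n by (auto simp: zero3_eq)
      thus ?thesis using assms(1) by blast
    qed
  qed
qed

lemma lincomb_zero3: "lincomb c v 0 zero3 = scale3 c v"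
  by (cases v) (simp add: lincomb_def zero3_eq)

lemma span1_conv_range: "span1 v = range (\<lambda>c. scale3 c v)"
  by (auto simp: span1_def lincomb_zero3)

lemma scale3_eq_zero_iff: "scale3 c v = zero3 \<longleftrightarrow> c = 0 \<or> v = zero3"
  by (cases v) (auto simp: zero3_eq)

lemma scale3_one[simp]: "scale3 1 v = v" by (cases v) auto
lemma scale3_scale3[simp]: "scale3 a (scale3 b v) = scale3 (a*b) v" by (cases v) (auto simp: mult_ac)
lemma dot_scale3_right: "dot n (scale3 c v) = c * dot n v" by (cases n; cases v) (auto simp: algebra_simps)
lemma dot_scale3_left: "dot (scale3 c n) v = c * dot n v" by (cases n; cases v) (auto simp: algebra_simps)
lemma dot_comm: "dot n v = dot v n" by (cases n; cases v) (auto simp: algebra_simps)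
lemma cross_eq_zero_commute: "cross v w = zero3 \<longleftrightarrow> cross w v = zero3"
  by (cases v; cases w) (auto simp: zero3_eq algebra_simps)
lemma cross_scale3_self: "cross v (scale3 c v) = zero3" by (cases v) (auto simp: zero3_eq algebra_simps)
lemma dot_cross_left[simp]: "dot n (cross n m) = 0" by (cases n; cases m) (auto simp: algebra_simps)
lemma dot_cross_right[simp]: "dot m (cross n m) = 0" by (cases n; cases m) (auto simp: algebra_simps)
lemma scale3_in_span1: "scale3 c v \<in> span1 v" by (auto simp: span1_conv_range)
lemma in_span1: "v \<in> span1 v" using scale3_in_span1[of 1 v] by simp

lemma cross_eq_zero_imp_scale3:
  fixes v w :: "'a::field vec3"
  assumes "v \<noteq> zero3" "cross v w = zero3"
  shows "\<exists>c. w = scale3 c v"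
proof -
  obtain a b c where v: "v = (a,b,c)" by (cases v)
  obtain x y z where w: "w = (x,y,z)" by (cases w)
  have e: "b*z = c*y" "c*x = a*z" "a*y = b*x" using assms(2) by (auto simp: v w zero3_eq)
  show ?thesis
  proof (cases "a \<noteq> 0")
    case True
    hence "w = scale3 (x/a) v" using e by (auto simp: v w field_simps)
    thus ?thesis by blast
  next
    case a0: False
    show ?thesis
    proof (cases "b \<noteq> 0")
      case True
      hence "w = scale3 (y/b) v" using e a0 by (auto simp: v w field_simps)
      thus ?thesis by blast
    next
      case False
      hence "c \<noteq> 0" using a0 assms(1) v by (auto simp: zero3_eq)
      hence "w = scale3 (z/c) v" using e a0 False by (auto simp: v w field_simps)
      thus ?thesis by blast
    qed
  qed
qed

lemma span1_eq_span1_iff: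
  fixes v w :: "'a::field vec3"
  assumes "v \<noteq> zero3" "w \<noteq> zero3"
  shows "span1 v = span1 w \<longleftrightarrow> cross v w = zero3"
proof
  assume "span1 v = span1 w"
  hence "w \<in> span1 v" using in_span1 by blast
  then obtain c where "w = scale3 c v" by (auto simp: span1_conv_range)
  thus "cross v w = zero3" using cross_scale3_self by simp
next
  assume "cross v w = zero3"
  then obtain c where c: "w = scale3 c v" using cross_eq_zero_imp_scale3 assms by blast
  hence c0: "c \<noteq> 0" using assms by (auto simp: scale3_eq_zero_iff)
  have "v = scale3 (1/c) w" using c c0 by simp
  show "span1 v = span1 w"
  proof
    show "span1 w \<subseteq> span1 v" using c by (auto simp: span1_conv_range)
    show "span1 v \<subseteq> span1 w" using \<open>v = scale3 (1/c) w\<close> by (auto simp: span1_conv_range)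
  qed
qed

lemma span1_subset_imp_eq:
  fixes v w :: "'a::field vec3"
  assumes "v \<noteq> zero3" "w \<noteq> zero3" "span1 w \<subseteq> span1 v"
  shows "span1 w = span1 v"
proof -
  have "w \<in> span1 v" using in_span1 assms(3) by blast
  then obtain c where "w = scale3 c v" by (auto simp: span1_conv_range)
  hence "cross v w = zero3" using cross_scale3_self by simp
  thus ?thesis using span1_eq_span1_iff assms by metis
qed

lemma span1_subset_perp_iff: "span1 v \<subseteq> perp n \<longleftrightarrow> dot n v = 0"
  using in_span1[of v] by (auto simp: span1_conv_range perp_def dot_scale3_right)

lemma cross_cross_eq_zero:
  fixes x n m :: "'a::field vec3"
  assumes "dot x n = 0" "dot x m = 0"
  shows "cross x (cross n m) = zero3"
proof -
  obtain a b c where x: "x = (a,b,c)" by (cases x)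
  obtain n1 n2 n3 where n: "n = (n1,n2,n3)" by (cases n)
  obtain m1 m2 m3 where m: "m = (m1,m2,m3)" by (cases m)
  have "cross x (cross n m) = (n1 * dot x m - m1 * dot x n, n2 * dot x m - m2 * dot x n, n3 * dot x m - m3 * dot x n)"
    by (simp add: x n m algebra_simps)
  thus ?thesis using assms by (simp add: zero3_eq)
qed

lemma perp_subset_imp_cross_eq_zero:
  fixes n m :: "'a::field vec3"
  assumes "perp n \<subseteq> perp m"
  shows "cross n m = zero3"
proof -
  obtain a b c where n: "n = (a,b,c)" by (cases n)
  have de: "\<And>e. dot m (cross n e) = 0"
  proof -
    fix e
    have "cross n e \<in> perp n" by (simp add: perp_def)
    hence "cross n e \<in> perp m" using assms by blast
    thus "dot m (cross n e) = 0" by (simp add: perp_def)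
  qed
  obtain x y z where m: "m = (x,y,z)" by (cases m)
  from de[of "(1,0,0)"] have e1: "c*y = b*z" by (simp add: n m mult.commute)
  from de[of "(0,1,0)"] have e2: "a*z = c*x" by (simp add: n m mult.commute)
  from de[of "(0,0,1)"] have e3: "b*x = a*y" by (simp add: n m mult.commute)
  show ?thesis using e1 e2 e3 by (simp add: n m zero3_eq mult.commute)
qed

lemma perp_eq_perp_iff:
  fixes n m :: "'a::field vec3"
  assumes "n \<noteq> zero3" "m \<noteq> zero3"
  shows "perp n = perp m \<longleftrightarrow> cross n m = zero3"
proof
  assume "perp n = perp m" thus "cross n m = zero3" using perp_subset_imp_cross_eq_zero by blast
next
  assume "cross n m = zero3"
  then obtain c where c: "m = scale3 c n" using cross_eq_zero_imp_scale3 assms by blast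
  hence "c \<noteq> 0" using assms by (auto simp: scale3_eq_zero_iff)
  thus "perp n = perp m" using c by (auto simp: perp_def dot_scale3_left)
qed

lemma perp_eq_perp_iff_span1:
  fixes n m :: "'a::field vec3"
  assumes "n \<noteq> zero3" "m \<noteq> zero3"
  shows "perp n = perp m \<longleftrightarrow> span1 n = span1 m"
  using perp_eq_perp_iff span1_eq_span1_iff assms by metis

lemma perp_Int_perp:
  fixes n m :: "'a::field vec3"
  assumes "cross n m \<noteq> zero3"
  shows "perp n \<inter> perp m = span1 (cross n m)"
proof
  show "span1 (cross n m) \<subseteq> perp n \<inter> perp m"
    by (auto simp: span1_conv_range perp_def dot_scale3_right)
  show "perp n \<inter> perp m \<subseteq> span1 (cross n m)"
  proof
    fix v assume "v \<in> perp n \<inter> perp m"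
    hence "dot v n = 0" "dot v m = 0" by (auto simp: perp_def dot_comm)
    hence "cross v (cross n m) = zero3" by (rule cross_cross_eq_zero)
    hence "cross (cross n m) v = zero3" using cross_eq_zero_commute by blast
    then obtain c where "v = scale3 c (cross n m)" using cross_eq_zero_imp_scale3 assms by blast
    thus "v \<in> span1 (cross n m)" by (simp add: scale3_in_span1)
  qed
qed

lemma lincomb_eq: "lincomb a (u1,u2,u3) b (w1,w2,w3) = (a*u1+b*w1, a*u2+b*w2, a*u3+b*w3)"
  by (simp add: lincomb_def)

lemma lin_indep2_iff:
  fixes u w :: "'a::field vec3"
  shows "lin_indep2 u w \<longleftrightarrow> cross u w \<noteq> zero3"
proof
  assume li: "lin_indep2 u w"
  show "cross u w \<noteq> zero3"
  proof
    assume cz: "cross u w = zero3"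
    show False
    proof (cases "u = zero3")
      case True
      hence "lincomb 1 u 0 w = zero3" by (cases w) (simp add: zero3_eq lincomb_eq)
      thus False using li[unfolded lin_indep2_def, rule_format, of 1 0] by simp
    next
      case False
      then obtain c where "w = scale3 c u" using cross_eq_zero_imp_scale3 cz by blast
      hence "lincomb c u (-1) w = zero3" by (cases u) (simp add: zero3_eq lincomb_eq)
      thus False using li[unfolded lin_indep2_def, rule_format, of c "-1"] by simp
    qed
  qed
next
  assume cz: "cross u w \<noteq> zero3"
  show "lin_indep2 u w" unfolding lin_indep2_def
  proof (intro allI impI)
    fix a b assume e: "lincomb a u b w = zero3"
    obtain u1 u2 u3 where u: "u = (u1,u2,u3)" by (cases u)
    obtain w1 w2 w3 where w: "w = (w1,w2,w3)" by (cases w)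
    have e': "a*u1 + b*w1 = 0" "a*u2+b*w2 = 0" "a*u3+b*w3 = 0"
      using e by (auto simp: u w lincomb_eq zero3_eq)
    have a0: "a = 0"
    proof (rule ccontr)
      assume "a \<noteq> 0"
      hence "u = scale3 (-b/a) w" using e' by (auto simp: u w field_simps eq_neg_iff_add_eq_0)
      hence "cross u w = zero3" using cross_scale3_self cross_eq_zero_commute by metis
      thus False using cz by simp
    qed
    have b0: "b = 0"
    proof (rule ccontr)
      assume "b \<noteq> 0"
      hence "w = zero3" using e' a0 by (simp add: w zero3_eq)
      hence "cross u w = zero3" by (cases u) (simp add: w zero3_eq)
      thus False using cz by simp
    qed
    show "a = 0 \<and> b = 0" using a0 b0 by simp
  qed
qed

lemma eq_lincomb_divide: "(k::'a::field) \<noteq> 0 \<Longrightarrow> k*v = A*u + B*w \<Longrightarrow> v = (A/k)*u + (B/k)*w"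
  by (simp add: field_simps)

lemma solve_lincomb_by_minor:
  fixes u1 u2 u3 w1 w2 w3 v1 v2 v3 k :: "'a::field"
  assumes "k = u1*w2 - u2*w1" "k \<noteq> 0" "(u2*w3-u3*w2)*v1 + (u3*w1-u1*w3)*v2 + k*v3 = 0"
  shows "v1 = ((v1*w2-v2*w1)/k)*u1 + ((u1*v2-u2*v1)/k)*w1
       \<and> v2 = ((v1*w2-v2*w1)/k)*u2 + ((u1*v2-u2*v1)/k)*w2
       \<and> v3 = ((v1*w2-v2*w1)/k)*u3 + ((u1*v2-u2*v1)/k)*w3"
proof -
  have "k*v3 = -((u2*w3-u3*w2)*v1 + (u3*w1-u1*w3)*v2)" by (metis assms(3) add.commute neg_eq_iff_add_eq_0)
  hence 3: "k*v3 = (v1*w2-v2*w1)*u3 + (u1*v2-u2*v1)*w3" by (simp add: algebra_simps)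
  have 1: "k*v1 = (v1*w2-v2*w1)*u1 + (u1*v2-u2*v1)*w1" unfolding assms(1) by (simp add: algebra_simps)
  have 2: "k*v2 = (v1*w2-v2*w1)*u2 + (u1*v2-u2*v1)*w2" unfolding assms(1) by (simp add: algebra_simps)
  show ?thesis using eq_lincomb_divide[OF assms(2)] 1 2 3 by blast
qed

lemma span2_eq_perp_cross:
  fixes u w :: "'a::field vec3"
  assumes "cross u w \<noteq> zero3"
  shows "span2 u w = perp (cross u w)"
proof
  obtain u1 u2 u3 where u: "u = (u1,u2,u3)" by (cases u)
  obtain w1 w2 w3 where w: "w = (w1,w2,w3)" by (cases w)
  show "span2 u w \<subseteq> perp (cross u w)"
  proof
    fix v assume "v \<in> span2 u w"
    then obtain a b where "v = lincomb a u b w" by (auto simp: span2_def)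
    thus "v \<in> perp (cross u w)" by (simp add: perp_def u w lincomb_eq algebra_simps)
  qed
  show "perp (cross u w) \<subseteq> span2 u w"
  proof
    fix v assume "v \<in> perp (cross u w)"
    obtain v1 v2 v3 where v: "v = (v1,v2,v3)" by (cases v)
    have dv: "(u2*w3-u3*w2)*v1 + (u3*w1-u1*w3)*v2 + (u1*w2-u2*w1)*v3 = 0"
      using \<open>v \<in> perp (cross u w)\<close> by (simp add: perp_def u w v)
    have c: "u1*w2-u2*w1 \<noteq> 0 \<or> u2*w3-u3*w2 \<noteq> 0 \<or> u3*w1-u1*w3 \<noteq> 0"
      using assms by (auto simp: u w zero3_eq)
    have "\<exists>a b. v = lincomb a u b w"
    proof -
      { assume k: "u1*w2-u2*w1 \<noteq> 0"
        from solve_lincomb_by_minor[OF refl k dv] have ?thesis by (simp only: u w v lincomb_eq prod.inject) blast }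
      moreover
      { assume k: "u2*w3-u3*w2 \<noteq> 0"
        have dv': "(u3*w1-u1*w3)*v2 + (u1*w2-u2*w1)*v3 + (u2*w3-u3*w2)*v1 = 0" using dv by (simp add: algebra_simps)
        from solve_lincomb_by_minor[OF refl k dv'] have ?thesis by (simp only: u w v lincomb_eq prod.inject) blast }
      moreover
      { assume k: "u3*w1-u1*w3 \<noteq> 0"
        have dv': "(u1*w2-u2*w1)*v3 + (u2*w3-u3*w2)*v1 + (u3*w1-u1*w3)*v2 = 0" using dv by (simp add: algebra_simps)
        from solve_lincomb_by_minor[OF refl k dv'] have ?thesis by (simp only: u w v lincomb_eq prod.inject) blast }
      ultimately show ?thesis using c by blast
    qed
    thus "v \<in> span2 u w" by (auto simp: span2_def)
  qed
qed

lemma perp_cross_eq_perp: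
  fixes n :: "'a::field vec3"
  assumes "n \<noteq> zero3" "k \<noteq> 0" "cross u w = scale3 k n"
  shows "cross u w \<noteq> zero3" "perp (cross u w) = perp n"
proof -
  show nz: "cross u w \<noteq> zero3" using assms by (simp add: scale3_eq_zero_iff)
  have "cross n (cross u w) = zero3" using assms(3) cross_scale3_self by simp
  thus "perp (cross u w) = perp n" using perp_eq_perp_iff[OF assms(1) nz] by simp
qed

lemma PG_lines_eq_perp_image: "(PG_lines :: 'a::{field,finite} vec3 set set) = perp ` {n. n \<noteq> zero3}"
proof
  show "PG_lines \<subseteq> perp ` {n. n \<noteq> zero3}"
    by (auto simp: PG_lines_def lin_indep2_iff span2_eq_perp_cross)
  show "perp ` {n. n \<noteq> zero3} \<subseteq> (PG_lines :: 'a vec3 set set)"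
  proof
    fix L assume "L \<in> perp ` {n::'a vec3. n \<noteq> zero3}"
    then obtain n :: "'a vec3" where n: "n \<noteq> zero3" "L = perp n" by auto
    obtain n1 n2 n3 where nn: "n = (n1,n2,n3)" by (cases n)
    have "\<exists>u w. cross u w \<noteq> zero3 \<and> perp (cross u w) = perp n"
    proof -
      { assume k: "n3 \<noteq> 0"
        have "cross (n3,0,-n1) (0,n3,-n2) = scale3 n3 n" by (simp add: nn algebra_simps)
        hence ?thesis using perp_cross_eq_perp[OF n(1) k] by blast }
      moreover
      { assume k: "n1 \<noteq> 0"
        have "cross (-n2,n1,0) (-n3,0,n1) = scale3 n1 n" by (simp add: nn algebra_simps)
        hence ?thesis using perp_cross_eq_perp[OF n(1) k] by blast }
      moreover
      { assume k: "n2 \<noteq> 0"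
        have "-n2 \<noteq> 0" using k by simp
        moreover have "cross (n2,-n1,0) (0,-n3,n2) = scale3 (-n2) n" by (simp add: nn algebra_simps)
        ultimately have ?thesis using perp_cross_eq_perp[OF n(1)] by blast }
      ultimately show ?thesis using n(1) nn by (auto simp: zero3_eq)
    qed
    then obtain u w where uw: "cross u w \<noteq> zero3" "perp (cross u w) = perp n" by blast
    hence "L = span2 u w" using n(2) span2_eq_perp_cross by metis
    moreover have "lin_indep2 u w" using uw lin_indep2_iff by blast
    ultimately show "L \<in> PG_lines" unfolding PG_lines_def by blast
  qed
qed

lemma card_Collect_nonzero3:
  fixes P :: "'a::{field,finite} vec3 \<Rightarrow> bool"
  assumes "P zero3"
  shows "card {v. P v} = Suc (card {v. v \<noteq> zero3 \<and> P v})"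
proof -
  have "{v. P v} = insert zero3 {v. v \<noteq> zero3 \<and> P v}" using assms by auto
  thus ?thesis by simp
qed

lemma exists_dot_eq_1:
  fixes n :: "'a::field vec3"
  assumes "n \<noteq> zero3"
  shows "\<exists>w. dot n w = 1"
proof -
  obtain a b c where n: "n = (a,b,c)" by (cases n)
  consider "a \<noteq> 0" | "b \<noteq> 0" | "c \<noteq> 0" using assms n by (auto simp: zero3_eq)
  thus ?thesis
  proof cases
    case 1 thus ?thesis by (intro exI[of _ "(1/a,0,0)"]) (simp add: n)
  next
    case 2 thus ?thesis by (intro exI[of _ "(0,1/b,0)"]) (simp add: n)
  next
    case 3 thus ?thesis by (intro exI[of _ "(0,0,1/c)"]) (simp add: n)
  qed
qed

text \<open>All level sets of \<open>dot n\<close> are translates of \<open>perp n\<close>.\<close>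

lemma dot_lincomb: "dot n (lincomb a u b w) = a * dot n u + b * dot n w"
  by (cases n; cases u; cases w) (simp add: lincomb_def algebra_simps)

lemma lincomb_lincomb_cancel: "lincomb 1 (lincomb 1 v c w) (- c) w = v"
  by (cases v; cases w) (simp add: lincomb_def)

lemma card_UNIV_vec3_eq_mult_card_perp:
  fixes n :: "'a::{field,finite} vec3"
  assumes "n \<noteq> zero3"
  shows "card (UNIV :: 'a vec3 set) = card (UNIV :: 'a set) * card (perp n)"
proof -
  obtain w where w: "dot n w = 1" using exists_dot_eq_1[OF assms] by blast
  have "{v \<in> UNIV. dot n v = c} = (\<lambda>v. lincomb 1 v c w) ` perp n" for c
  proof
    show "(\<lambda>v. lincomb 1 v c w) ` perp n \<subseteq> {v \<in> UNIV. dot n v = c}"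
      using w by (auto simp: perp_def dot_lincomb)
    show "{v \<in> UNIV. dot n v = c} \<subseteq> (\<lambda>v. lincomb 1 v c w) ` perp n"
    proof
      fix v assume "v \<in> {v \<in> UNIV. dot n v = c}"
      hence "lincomb 1 v (- c) w \<in> perp n" using w by (simp add: perp_def dot_lincomb)
      moreover have "v = lincomb 1 (lincomb 1 v (- c) w) c w"
        using lincomb_lincomb_cancel[of v "- c" w] by simp
      ultimately show "v \<in> (\<lambda>v. lincomb 1 v c w) ` perp n" by blast
    qed
  qed
  moreover have "inj_on (\<lambda>v. lincomb 1 v c w) (perp n)" for c
    by (rule inj_on_inverseI[of _ "\<lambda>v. lincomb 1 v (- c) w"]) (rule lincomb_lincomb_cancel)
  ultimately have "card {v \<in> UNIV. dot n v = c} = card (perp n)" for c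
    using card_image by metis
  thus ?thesis using card_eq_sum_card_fibers[of UNIV UNIV "dot n"] by simp
qed

section \<open>The Hermitian form on \<open>F\<^sup>3\<close> and the unital\<close>

context hermitian_field
begin

lemma herm_eq: "herm q (x::'a,y,z) = fnorm x + fnorm y + fnorm z"
  by (simp add: herm_def fnorm_def conj_def)

lemma herm_rot [simp]: "herm q (rot (v::'a vec3)) = herm q v"
  by (cases v) (simp add: herm_eq add_ac)

lemma herm_zero3 [simp]: "herm q (zero3::'a vec3) = 0"
  by (simp add: zero3_eq herm_eq)

lemma herm_scale3: "herm q (scale3 c (v::'a vec3)) = fnorm c * herm q v"
  by (cases v) (simp add: herm_eq fnorm_mult algebra_simps)

lemma card_UNIV_pair: "card (UNIV :: ('a \<times> 'a) set) = q^4"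
  using card_field by (simp add: UNIV_Times_UNIV[symmetric] card_cartesian_product del: UNIV_Times_UNIV)

lemma card_UNIV_vec3: "card (UNIV :: 'a vec3 set) = q^6"
  using card_field card_UNIV_pair
  by (simp add: UNIV_Times_UNIV[symmetric] card_cartesian_product power_add[symmetric] del: UNIV_Times_UNIV)

lemma card_perp:
  assumes "(n::'a vec3) \<noteq> zero3"
  shows "card (perp n) = q^4"
proof -
  have "q^2 * q^4 = q^2 * card (perp n)"
    using card_UNIV_vec3_eq_mult_card_perp[OF assms] card_UNIV_vec3 card_field
    by (simp add: power_add[symmetric])
  thus ?thesis using q_ge_2 by (subst (asm) mult_left_cancel) auto
qed

text \<open>On \<open>perp n\<close> with \<open>n = (n1,n2,n3)\<close>, \<open>n3 \<noteq> 0\<close>, use the coordinates \<open>(s, t, m1 s + m2 t)\<close>;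
  the Hermitian form becomes a binary form whose discriminant is \<open>herm n / fnorm n3\<close>.\<close>

lemma card_isotropic_perp_third:
  fixes n :: "'a vec3"
  assumes "third n \<noteq> 0"
  shows "card {v. dot n v = 0 \<and> herm q v = 0} = (if herm q n = 0 then q^2 else q^3 + q^2 - q)"
proof -
  obtain n1 n2 n3 where n: "n = (n1,n2,n3)" by (cases n)
  have n3: "n3 \<noteq> 0" using assms n by simp
  define m1 where "m1 = - n1 / n3"
  define m2 where "m2 = - n2 / n3"
  define g where "g = (\<lambda>(s,t). (s, t, m1 * s + m2 * t))"
  have "inj g" by (auto simp: g_def inj_on_def)
  have perp_eq: "dot n v = 0 \<longleftrightarrow> v \<in> range g" for v
  proof -
    obtain a b c where v: "v = (a,b,c)" by (cases v)
    have "dot n v = n3 * (c - (m1 * a + m2 * b))"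
      using n3 by (simp add: v n m1_def m2_def field_simps)
    thus ?thesis using n3 by (auto simp: g_def v image_iff)
  qed
  define al where "al = 1 + fnorm m1"
  define ga where "ga = 1 + fnorm m2"
  define be where "be = m1 * conj m2"
  have herm_g: "herm q (g (s,t)) = binary_form al ga be s t" for s t
    by (simp add: g_def herm_eq binary_form_def al_def ga_def be_def fnorm_def
        conj_add conj_mult algebra_simps)
  have "{v. dot n v = 0 \<and> herm q v = 0} = g ` {(s,t). binary_form al ga be s t = 0}"
    using perp_eq herm_g by auto
  hence "card {v. dot n v = 0 \<and> herm q v = 0} = card {(s,t). binary_form al ga be s t = 0}"
    using \<open>inj g\<close> by (simp add: card_image inj_on_subset)
  moreover have "al \<in> Fq" "ga \<in> Fq" by (auto simp: al_def ga_def Fq_def conj_add conj_fnorm)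
  moreover have "\<not> (al = 0 \<and> ga = 0 \<and> be = 0)" by (auto simp: al_def ga_def be_def)
  moreover have "al * ga - fnorm be = herm q n / fnorm n3"
    using n3 by (simp add: al_def ga_def be_def m1_def m2_def fnorm_mult fnorm_conj fnorm_divide
        herm_eq n field_simps)
  ultimately show ?thesis using card_binary_form_zeros n3 by simp
qed

lemma card_isotropic_perp_rot:
  "card {v. dot (rot n) v = 0 \<and> herm q v = 0} = card {v. dot n v = 0 \<and> herm q (v::'a vec3) = 0}"
  by (rule card_Collect_rot) simp

lemma card_isotropic_perp:
  assumes "(n::'a vec3) \<noteq> zero3"
  shows "card {v. dot n v = 0 \<and> herm q v = 0} = (if herm q n = 0 then q^2 else q^3 + q^2 - q)"
  by (rule vec3_nonzero_wlog_third[OF _ card_isotropic_perp_third assms])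
    (simp add: card_isotropic_perp_rot)

lemma span1_in_unital_iff:
  assumes "(v::'a vec3) \<noteq> zero3"
  shows "span1 v \<in> unital q \<longleftrightarrow> herm q v = 0"
proof
  assume "span1 v \<in> unital q"
  then obtain w where w: "w \<in> span1 v" "w \<noteq> zero3" "herm q w = 0" by (auto simp: unital_def)
  then obtain c where c: "w = scale3 c v" by (auto simp: span1_conv_range)
  hence "c \<noteq> 0" using w by (auto simp: scale3_eq_zero_iff)
  thus "herm q v = 0" using w c by (simp add: herm_scale3)
next
  assume "herm q v = 0"
  moreover have "span1 v \<in> PG_points" using assms unfolding PG_points_def by blast
  ultimately show "span1 v \<in> unital q" using assms in_span1[of v] by (auto simp: unital_def)
qed

lemma unital_eq_span1_image: "unital q = span1 ` {v::'a vec3. v \<noteq> zero3 \<and> herm q v = 0}"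
  using span1_in_unital_iff by (fastforce simp: unital_def PG_points_def)

lemma card_eq_mult_card_span1_image:
  fixes S :: "'a vec3 set"
  assumes "\<And>v. v \<in> S \<Longrightarrow> v \<noteq> zero3" "\<And>v c. v \<in> S \<Longrightarrow> c \<noteq> 0 \<Longrightarrow> scale3 c v \<in> S"
  shows "card S = (q^2 - 1) * card (span1 ` S)"
proof -
  have "card {v\<in>S. span1 v = span1 w} = q^2 - 1" if "w \<in> S" for w
  proof -
    have w0: "w \<noteq> zero3" using assms that by auto
    have "{v\<in>S. span1 v = span1 w} = (\<lambda>c. scale3 c w) ` (UNIV - {0})"
    proof
      show "{v\<in>S. span1 v = span1 w} \<subseteq> (\<lambda>c. scale3 c w) ` (UNIV - {0})"
      proof
        fix v assume v: "v \<in> {v\<in>S. span1 v = span1 w}"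
        then obtain c where c: "v = scale3 c w"
          using in_span1[of v] by (auto simp: span1_conv_range)
        moreover have "v \<noteq> zero3" using v assms(1) by blast
        hence "c \<noteq> 0" using c by (auto simp: scale3_eq_zero_iff)
        ultimately show "v \<in> (\<lambda>c. scale3 c w) ` (UNIV - {0})" by auto
      qed
      show "(\<lambda>c. scale3 c w) ` (UNIV - {0}) \<subseteq> {v\<in>S. span1 v = span1 w}"
      proof
        fix v assume "v \<in> (\<lambda>c. scale3 c w) ` (UNIV - {0})"
        then obtain c where c: "c \<noteq> 0" "v = scale3 c w" by auto
        have "cross v w = zero3"
          using c cross_scale3_self[of w c] cross_eq_zero_commute by blast
        moreover have "v \<noteq> zero3" using c w0 by (simp add: scale3_eq_zero_iff)
        ultimately show "v \<in> {v\<in>S. span1 v = span1 w}"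
          using c assms(2) that span1_eq_span1_iff[OF _ w0] by auto
      qed
    qed
    moreover have "inj (\<lambda>c. scale3 c w)"
    proof (rule injI)
      fix a b assume "scale3 a w = scale3 b w"
      hence "scale3 (a - b) w = zero3" by (cases w) (simp add: zero3_eq algebra_simps)
      thus "a = b" using w0 by (simp add: scale3_eq_zero_iff)
    qed
    ultimately show ?thesis
      using card_field by (simp add: card_image inj_on_subset card_Diff_singleton)
  qed
  hence "(\<Sum>P\<in>span1 ` S. card {v\<in>S. span1 v = P}) = (\<Sum>P\<in>span1 ` S. q^2 - 1)"
    by (intro sum.cong) auto
  thus ?thesis using card_eq_sum_card_fibers[of S "span1 ` S" span1] by simp
qed

lemma card_span1_image:
  fixes S :: "'a vec3 set"
  assumes "\<And>v. v \<in> S \<Longrightarrow> v \<noteq> zero3" "\<And>v c. v \<in> S \<Longrightarrow> c \<noteq> 0 \<Longrightarrow> scale3 c v \<in> S"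
    and "card S = (q^2 - 1) * k"
  shows "card (span1 ` S) = k"
  using card_eq_mult_card_span1_image[OF assms(1,2)] assms(3) q_squared_ge_4 by simp

lemma of_nat_q_squared_minus_1: "int (q^2 - 1) = int q^2 - 1"
  using q_squared_ge_4 by (simp add: of_nat_diff)

lemma of_nat_q_cubic: "int (q^3 + q^2 - q) = int q^3 + int q^2 - int q"
  using q_ge_2 by (subst of_nat_diff) (auto simp: power2_eq_square power3_eq_cube intro: order_trans[OF _ le_add2])

text \<open>Fixing \<open>(y,z)\<close>, the equation \<open>fnorm x = - (fnorm y + fnorm z)\<close> has \<open>1\<close> or \<open>q + 1\<close>
  solutions, and the pairs with \<open>fnorm y + fnorm z = 0\<close> are the zeros of a binary form.\<close>

lemma card_herm_zero: "int (card {v::'a vec3. herm q v = 0}) = int q^5 - int q^3 + int q^2"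
proof -
  define A where "A = {(y::'a,z::'a). binary_form 1 1 0 y z = 0}"
  have card_A: "card A = q^3 + q^2 - q"
    using card_binary_form_zeros[of 1 1 0] by (simp add: A_def Fq_def)
  have fiber: "card {x::'a. herm q (x,p) = 0} = (if p \<in> A then 1 else q + 1)" for p
  proof -
    obtain y z where p: "p = (y,z)" by (cases p)
    have "{x::'a. herm q (x,p) = 0} = {x. fnorm x = - (fnorm y + fnorm z)}"
      by (auto simp: p herm_eq add.assoc add_eq_0_iff2)
    moreover have "- (fnorm y + fnorm z) \<in> Fq"
      by (simp add: Fq_def conj_minus conj_add conj_diff conj_fnorm)
    moreover have "- (fnorm y + fnorm z) = 0 \<longleftrightarrow> p \<in> A"
      by (simp add: A_def p binary_form_def neg_eq_iff_add_eq_0)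
    ultimately show ?thesis using card_fnorm_fiber by presburger
  qed
  have "card {v::'a vec3. herm q v = 0} = (\<Sum>p::'a\<times>'a\<in>UNIV. card {x::'a. herm q (x,p) = 0})"
  proof -
    have "{v::'a vec3. herm q v = 0} = {(x,p). herm q (x,p) = 0}" by auto
    thus ?thesis using card_pairs_eq_sum[of "\<lambda>x p. herm q ((x::'a),(p::'a\<times>'a)) = 0"] by simp
  qed
  also have "\<dots> = (\<Sum>p\<in>UNIV - A. q + 1) + (\<Sum>p\<in>A. 1)"
    unfolding fiber by (subst sum.subset_diff[of A]) auto
  also have "\<dots> = (q^4 - card A) * (q + 1) + card A"
    using card_UNIV_pair by (simp add: card_Diff_subset)
  finally have total: "card {v::'a vec3. herm q v = 0} = (q^4 - card A) * (q + 1) + card A" .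
  have "card A \<le> q^4" using card_UNIV_pair card_mono[of UNIV A] by simp
  hence "int (q^4 - card A) = int q^4 - int (card A)" by (simp add: of_nat_diff)
  hence "int (card {v::'a vec3. herm q v = 0})
      = (int q^4 - int (card A)) * (int q + 1) + int (card A)"
    by (simp only: total of_nat_add of_nat_mult of_nat_1)
  also have "\<dots> = int q^5 - int q^3 + int q^2" unfolding card_A of_nat_q_cubic by algebra
  finally show ?thesis .
qed

lemma card_isotropic_vectors:
  "card {v::'a vec3. v \<noteq> zero3 \<and> herm q v = 0} = (q^2 - 1) * (q^3 + 1)"
proof -
  have "int (card {v::'a vec3. v \<noteq> zero3 \<and> herm q v = 0}) = int q^5 - int q^3 + int q^2 - 1"
    using card_herm_zero card_Collect_nonzero3[of "\<lambda>v::'a vec3. herm q v = 0", OF herm_zero3]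
    by simp
  also have "\<dots> = int ((q^2 - 1) * (q^3 + 1))"
    unfolding of_nat_mult of_nat_q_squared_minus_1 by simp algebra
  finally show ?thesis by (simp only: of_nat_eq_iff)
qed

lemma card_unital: "card (unital q :: 'a vec3 set set) = q^3 + 1"
  unfolding unital_eq_span1_image
  by (rule card_span1_image) (auto simp: card_isotropic_vectors scale3_eq_zero_iff herm_scale3)

lemma card_nonzero_vectors: "card {v::'a vec3. v \<noteq> zero3} = (q^2 - 1) * (q^4 + q^2 + 1)"
proof -
  have "q^6 = Suc (card {v::'a vec3. v \<noteq> zero3})"
    using card_UNIV_vec3 card_Collect_nonzero3[of "\<lambda>_::'a vec3. True"] by simp
  hence "int (card {v::'a vec3. v \<noteq> zero3}) = int q^6 - 1"
    by (simp only: of_nat_power[symmetric])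
  also have "\<dots> = int ((q^2 - 1) * (q^4 + q^2 + 1))"
    unfolding of_nat_mult of_nat_q_squared_minus_1 by simp algebra
  finally show ?thesis by (simp only: of_nat_eq_iff)
qed

lemma unital_points_on_perp:
  "{P \<in> unital q. P \<subseteq> perp (n::'a vec3)} =
    span1 ` {v. v \<noteq> zero3 \<and> dot n v = 0 \<and> herm q v = 0}"
  unfolding unital_eq_span1_image using span1_subset_perp_iff by blast

lemma card_unital_points_on_perp:
  assumes "(n::'a vec3) \<noteq> zero3"
  shows "card {P \<in> unital q. P \<subseteq> perp n} = (if herm q n = 0 then 1 else q + 1)"
proof -
  have c: "Suc (card {v. v \<noteq> zero3 \<and> dot n v = 0 \<and> herm q v = 0})
      = (if herm q n = 0 then q^2 else q^3 + q^2 - q)"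
    using card_isotropic_perp[OF assms] card_Collect_nonzero3[of "\<lambda>v. dot n v = 0 \<and> herm q v = 0"]
    by simp
  have "card {v. v \<noteq> zero3 \<and> dot n v = 0 \<and> herm q v = 0}
      = (q^2 - 1) * (if herm q n = 0 then 1 else q + 1)"
  proof (cases "herm q n = 0")
    case True thus ?thesis using c by simp
  next
    case False
    hence "int (Suc (card {v. v \<noteq> zero3 \<and> dot n v = 0 \<and> herm q v = 0}))
        = int (q^3 + q^2 - q)"
      using c by simp
    hence "int (card {v. v \<noteq> zero3 \<and> dot n v = 0 \<and> herm q v = 0})
        = int q^3 + int q^2 - int q - 1"
      unfolding of_nat_q_cubic by simp
    also have "\<dots> = int ((q^2 - 1) * (q + 1))"
      unfolding of_nat_mult of_nat_q_squared_minus_1 by simp algebra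
    finally show ?thesis using False by (simp only: of_nat_eq_iff if_False)
  qed
  thus ?thesis unfolding unital_points_on_perp
    by (intro card_span1_image) (auto simp: scale3_eq_zero_iff herm_scale3 dot_scale3_right)
qed

lemma perp_in_secants_iff:
  assumes "(n::'a vec3) \<noteq> zero3"
  shows "perp n \<in> secants q \<longleftrightarrow> herm q n \<noteq> 0"
proof -
  have "perp n \<in> PG_lines" using assms PG_lines_eq_perp_image by blast
  thus ?thesis using card_unital_points_on_perp[OF assms] q_ge_2 by (auto simp: secants_def)
qed

lemma secants_eq_perp_image: "secants q = perp ` {n::'a vec3. n \<noteq> zero3 \<and> herm q n \<noteq> 0}"
  using perp_in_secants_iff by (auto simp: secants_def PG_lines_eq_perp_image)

lemma card_secants: "card (secants q :: 'a vec3 set set) = q^2 * (q^2 - q + 1)"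
proof -
  let ?S = "{n::'a vec3. n \<noteq> zero3 \<and> herm q n \<noteq> 0}"
  have "?S = {v. v \<noteq> zero3} - {v. v \<noteq> zero3 \<and> herm q v = 0}" by auto
  moreover have "{v::'a vec3. v \<noteq> zero3 \<and> herm q v = 0} \<subseteq> {v. v \<noteq> zero3}" by auto
  ultimately have "int (card ?S)
      = int (card {v::'a vec3. v \<noteq> zero3}) - int (card {v::'a vec3. v \<noteq> zero3 \<and> herm q v = 0})"
    by (simp add: card_Diff_subset card_mono of_nat_diff)
  also have "\<dots> = int ((q^2 - 1) * (q^2 * (q^2 - q + 1)))"
  proof -
    have "q \<le> q^2" by (simp add: power2_eq_square)
    hence c: "int (q^2 - q + 1) = int q^2 - int q + 1" by (simp add: of_nat_diff)
    show ?thesis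
      unfolding card_nonzero_vectors card_isotropic_vectors of_nat_mult c
      unfolding of_nat_q_squared_minus_1 of_nat_add of_nat_power of_nat_1 by algebra
  qed
  finally have "card ?S = (q^2 - 1) * (q^2 * (q^2 - q + 1))" by (simp only: of_nat_eq_iff)
  hence "card (span1 ` ?S) = q^2 * (q^2 - q + 1)"
    by (rule card_span1_image[rotated 2]) (auto simp: scale3_eq_zero_iff herm_scale3)
  moreover have "card (perp ` ?S) = card (span1 ` ?S)"
    by (rule card_image_eq_if_same_kernel) (auto simp: perp_eq_perp_iff_span1)
  ultimately show ?thesis using secants_eq_perp_image by simp
qed

end

section \<open>The cliques \<open>C\<^sub>P\<close>\<close>

context hermitian_field
begin

lemma secantsE:
  assumes "L \<in> (secants q :: 'a vec3 set set)"
  obtains n :: "'a vec3" where "n \<noteq> zero3" "herm q n \<noteq> 0" "L = perp n"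
  using assms secants_eq_perp_image by auto

lemma unitalE:
  assumes "P \<in> (unital q :: 'a vec3 set set)"
  obtains v :: "'a vec3" where "v \<noteq> zero3" "herm q v = 0" "P = span1 v"
  using assms unital_eq_span1_image by auto

lemma secants_Int_eq_span1:
  assumes "L \<in> (secants q :: 'a vec3 set set)" "M \<in> secants q" "L \<noteq> M"
  shows "\<exists>c. c \<noteq> zero3 \<and> L \<inter> M = span1 c"
proof -
  obtain n where n: "n \<noteq> zero3" "L = perp n" using secantsE[OF assms(1)] by metis
  obtain m where m: "m \<noteq> zero3" "M = perp m" using secantsE[OF assms(2)] by metis
  have "cross n m \<noteq> zero3" using perp_eq_perp_iff[OF n(1) m(1)] n m assms(3) by simp
  thus ?thesis using perp_Int_perp n m by blast
qed

lemma secants_Int_eq_unital_point: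
  assumes "L \<in> (secants q :: 'a vec3 set set)" "M \<in> secants q" "L \<noteq> M"
    and "P \<in> unital q" "P \<subseteq> L" "P \<subseteq> M"
  shows "L \<inter> M = P"
proof -
  obtain c where c: "c \<noteq> zero3" "L \<inter> M = span1 c" using secants_Int_eq_span1[OF assms(1-3)] by blast
  obtain v where v: "v \<noteq> zero3" "P = span1 v" using unitalE[OF assms(4)] by metis
  have "span1 v \<subseteq> span1 c" using assms(5,6) c v by auto
  thus ?thesis using span1_subset_imp_eq[OF c(1) v(1)] c v by simp
qed

lemma clique_at_span1:
  "clique_at q (span1 v) = perp ` {n. n \<noteq> zero3 \<and> herm q n \<noteq> 0 \<and> dot v n = (0::'a)}"
proof -
  have "span1 v \<subseteq> perp n \<longleftrightarrow> dot v n = 0" for n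
    by (simp add: span1_subset_perp_iff dot_comm)
  thus ?thesis unfolding clique_at_def secants_eq_perp_image by blast
qed

lemma card_clique_at:
  assumes "P \<in> (unital q :: 'a vec3 set set)"
  shows "card (clique_at q P) = q^2"
proof -
  obtain v :: "'a vec3" where v: "v \<noteq> zero3" "herm q v = 0" "P = span1 v"
    using unitalE[OF assms] by metis
  define T where "T = {n. n \<noteq> zero3 \<and> herm q n \<noteq> 0 \<and> dot v n = 0}"
  have "T = perp v - {n. dot v n = 0 \<and> herm q n = 0}"
    by (auto simp: T_def perp_def)
  hence "card T = card (perp v) - card {n. dot v n = 0 \<and> herm q n = 0}"
    by (simp add: card_Diff_subset perp_def Collect_mono)
  also have "\<dots> = (q^2 - 1) * q^2"
    using card_perp[OF v(1)] card_isotropic_perp[OF v(1)] v(2)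
    by (simp add: diff_mult_distrib power2_eq_square power4_eq_xxxx)
  finally have "card (span1 ` T) = q^2"
    by (rule card_span1_image[rotated 2]) (auto simp: T_def scale3_eq_zero_iff herm_scale3 dot_scale3_right)
  moreover have "card (perp ` T) = card (span1 ` T)"
    by (rule card_image_eq_if_same_kernel) (auto simp: T_def perp_eq_perp_iff_span1)
  ultimately show ?thesis using clique_at_span1 v(3) T_def by simp
qed

text \<open>Two points of the unital are never on a tangent, which meets it in a single point.\<close>

lemma clique_at_Int_clique_at:
  assumes "P \<in> (unital q :: 'a vec3 set set)" "Q \<in> unital q" "P \<noteq> Q"
  shows "\<exists>L. clique_at q P \<inter> clique_at q Q = {L}"
proof -
  obtain v :: "'a vec3" where v: "v \<noteq> zero3" "P = span1 v" using unitalE[OF assms(1)] by metis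
  obtain w :: "'a vec3" where w: "w \<noteq> zero3" "Q = span1 w" using unitalE[OF assms(2)] by metis
  define c where "c = cross v w"
  have c0: "c \<noteq> zero3" using span1_eq_span1_iff[OF v(1) w(1)] assms(3) v w c_def by simp
  have "dot c v = 0" "dot c w = 0"
    unfolding c_def by (metis dot_comm dot_cross_left, metis dot_comm dot_cross_right)
  hence PQ: "P \<subseteq> perp c" "Q \<subseteq> perp c" using v w by (simp_all add: span1_subset_perp_iff)
  have "herm q c \<noteq> 0"
  proof
    assume "herm q c = 0"
    hence "card {R \<in> unital q. R \<subseteq> perp c} = 1" using card_unital_points_on_perp[OF c0] by simp
    moreover have "card {P, Q} \<le> card {R \<in> unital q. R \<subseteq> perp c}"
      using PQ assms by (intro card_mono) auto
    ultimately show False using assms(3) by simp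
  qed
  hence "perp c \<in> secants q" using perp_in_secants_iff[OF c0] by simp
  moreover have "L = perp c" if "L \<in> clique_at q P \<inter> clique_at q Q" for L
  proof -
    have "L \<in> secants q" using that by (simp add: clique_at_def)
    then obtain n where n: "n \<noteq> zero3" "L = perp n" by (rule secantsE)
    have "dot n v = 0" "dot n w = 0"
      using that n v w by (auto simp: clique_at_def span1_subset_perp_iff)
    hence "cross n c = zero3" unfolding c_def by (intro cross_cross_eq_zero)
    thus "L = perp c" using perp_eq_perp_iff[OF n(1) c0] n by simp
  qed
  moreover have "perp c \<in> clique_at q P \<inter> clique_at q Q"
    using PQ \<open>perp c \<in> secants q\<close> by (simp add: clique_at_def)
  ultimately have "clique_at q P \<inter> clique_at q Q = {perp c}" by blast
  thus ?thesis by blast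
qed

lemma inj_on_clique_at: "inj_on (clique_at q) (unital q :: 'a vec3 set set)"
proof (rule inj_onI)
  fix P Q :: "'a vec3 set"
  assume P: "P \<in> unital q" and Q: "Q \<in> unital q" and eq: "clique_at q P = clique_at q Q"
  show "P = Q"
  proof (rule ccontr)
    assume "P \<noteq> Q"
    then obtain L where "clique_at q P \<inter> clique_at q Q = {L}"
      using clique_at_Int_clique_at[OF P Q] by blast
    hence "q^2 = 1" using eq card_clique_at[OF P] by simp
    thus False using q_squared_ge_4 by simp
  qed
qed

lemma card_cliqueFamily: "card (cliqueFamily q :: 'a vec3 set set set) = q^3 + 1"
  unfolding cliqueFamily_def using card_image[OF inj_on_clique_at] card_unital by simp

lemma card_cliqueFamily_Int:
  assumes "K1 \<in> (cliqueFamily q :: 'a vec3 set set set)" "K2 \<in> cliqueFamily q" "K1 \<noteq> K2"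
  shows "card (K1 \<inter> K2) = 1"
  using assms clique_at_Int_clique_at by (fastforce simp: cliqueFamily_def)

lemma card_cliques_containing_secant:
  assumes "L \<in> (secants q :: 'a vec3 set set)"
  shows "card {K \<in> cliqueFamily q. L \<in> K} = q + 1"
proof -
  have "{K \<in> cliqueFamily q. L \<in> K} = clique_at q ` {P \<in> unital q. P \<subseteq> L}"
    using assms by (auto simp: cliqueFamily_def clique_at_def)
  moreover have "inj_on (clique_at q) {P \<in> unital q. P \<subseteq> L}"
    using inj_on_clique_at by (rule inj_on_subset) auto
  ultimately show ?thesis
    using assms by (simp add: card_image secants_def)
qed

lemma clique_at_Int_clique_at_on_secant:
  assumes "L \<in> (secants q :: 'a vec3 set set)"
    and "P \<in> unital q" "P \<subseteq> L" "Q \<in> unital q" "Q \<subseteq> L" "P \<noteq> Q"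
  shows "clique_at q P \<inter> clique_at q Q = {L}"
proof -
  obtain L' where "clique_at q P \<inter> clique_at q Q = {L'}"
    using clique_at_Int_clique_at[OF assms(2,4,6)] by blast
  moreover have "L \<in> clique_at q P \<inter> clique_at q Q" using assms(1,3,5) by (simp add: clique_at_def)
  ultimately show ?thesis by blast
qed

lemma adjacent_eq_Union_clique_at:
  assumes "L \<in> (secants q :: 'a vec3 set set)"
  shows "{M. Hadj q L M} = (\<Union>P\<in>{P \<in> unital q. P \<subseteq> L}. clique_at q P - {L})"
proof
  show "{M. Hadj q L M} \<subseteq> (\<Union>P\<in>{P \<in> unital q. P \<subseteq> L}. clique_at q P - {L})"
    by (auto simp: Hadj_def clique_at_def)
  show "(\<Union>P\<in>{P \<in> unital q. P \<subseteq> L}. clique_at q P - {L}) \<subseteq> {M. Hadj q L M}"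
  proof
    fix M assume "M \<in> (\<Union>P\<in>{P \<in> unital q. P \<subseteq> L}. clique_at q P - {L})"
    then obtain P where P: "P \<in> unital q" "P \<subseteq> L" "M \<in> secants q" "P \<subseteq> M" "M \<noteq> L"
      by (auto simp: clique_at_def)
    hence "L \<inter> M = P" using secants_Int_eq_unital_point[OF assms] by metis
    thus "M \<in> {M. Hadj q L M}" using P assms by (auto simp: Hadj_def)
  qed
qed

lemma card_adjacent:
  assumes L: "L \<in> (secants q :: 'a vec3 set set)"
  shows "card {M. Hadj q L M} = (q + 1) * (q^2 - 1)"
proof -
  define Ps where "Ps = {P \<in> unital q. P \<subseteq> L}"
  have "card (\<Union>P\<in>Ps. clique_at q P - {L}) = (\<Sum>P\<in>Ps. card (clique_at q P - {L}))"
    by (rule card_UN_disjoint)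
      (use clique_at_Int_clique_at_on_secant[OF L] in \<open>auto simp: Ps_def\<close>)
  also have "\<dots> = (\<Sum>P\<in>Ps. q^2 - 1)"
    using L card_clique_at by (intro sum.cong) (auto simp: Ps_def clique_at_def card_Diff_singleton)
  also have "\<dots> = (q + 1) * (q^2 - 1)" using L by (simp add: Ps_def secants_def)
  finally show ?thesis using adjacent_eq_Union_clique_at[OF L] by (simp add: Ps_def)
qed

lemma is_clique_clique_at:
  assumes "P \<in> (unital q :: 'a vec3 set set)"
  shows "is_clique q (clique_at q P)"
  using secants_Int_eq_unital_point[of _ _ P] assms
  by (auto simp: is_clique_def Hadj_def clique_at_def)

text \<open>A secant \<open>M\<close> adjacent to all of \<open>C\<^sub>P\<close> would meet its \<open>q\<^sup>2\<close> lines in distinct points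
  of the unital, but \<open>M\<close> carries only \<open>q + 1\<close> of them.\<close>

lemma exists_clique_at_not_adjacent:
  assumes P: "P \<in> (unital q :: 'a vec3 set set)" and M: "M \<in> secants q" "M \<notin> clique_at q P"
  shows "\<exists>L\<in>clique_at q P. \<not> Hadj q L M"
proof (rule ccontr)
  assume "\<not> ?thesis"
  hence adj: "Hadj q L M" if "L \<in> clique_at q P" for L using that by blast
  have PM: "\<not> P \<subseteq> M" using M by (auto simp: clique_at_def)
  have into: "(\<lambda>L. L \<inter> M) ` clique_at q P \<subseteq> {R \<in> unital q. R \<subseteq> M}"
    using adj by (auto simp: Hadj_def)
  have "inj_on (\<lambda>L. L \<inter> M) (clique_at q P)"
  proof (rule inj_onI)
    fix L L' assume LL: "L \<in> clique_at q P" "L' \<in> clique_at q P" "L \<inter> M = L' \<inter> M"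
    have R: "L \<inter> M \<in> unital q" "P \<noteq> L \<inter> M" using adj[OF LL(1)] PM by (auto simp: Hadj_def)
    obtain X where "clique_at q P \<inter> clique_at q (L \<inter> M) = {X}"
      using clique_at_Int_clique_at[OF P R] by metis
    moreover have "L \<in> clique_at q (L \<inter> M)" "L' \<in> clique_at q (L \<inter> M)"
      using LL by (auto simp: clique_at_def)
    ultimately show "L = L'" using LL by blast
  qed
  hence "card (clique_at q P) \<le> card {R \<in> unital q. R \<subseteq> M}"
    using card_inj_on_le[OF _ into] by simp
  hence "q * q \<le> q + 1" using card_clique_at[OF P] M by (simp add: secants_def power2_eq_square)
  moreover have "q * q \<ge> 2 * q" by (rule mult_le_mono1[OF q_ge_2])
  ultimately show False using q_ge_2 by linarith
qed

lemma is_maximal_clique_clique_at: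
  assumes P: "P \<in> (unital q :: 'a vec3 set set)"
  shows "is_maximal_clique q (clique_at q P)"
  unfolding is_maximal_clique_def
proof (intro conjI allI impI)
  show "is_clique q (clique_at q P)" using is_clique_clique_at[OF P] .
  fix K assume K: "is_clique q K \<and> clique_at q P \<subseteq> K"
  show "K = clique_at q P"
  proof (rule ccontr)
    assume "K \<noteq> clique_at q P"
    then obtain M where M: "M \<in> K" "M \<notin> clique_at q P" using K by blast
    hence "M \<in> secants q" using K by (auto simp: is_clique_def)
    then obtain L where "L \<in> clique_at q P" "\<not> Hadj q L M"
      using exists_clique_at_not_adjacent[OF P _ M(2)] by blast
    thus False using K M by (auto simp: is_clique_def)
  qed
qed

end

section \<open>No \<open>K\<^sub>4\<close> outside the cliques \<open>C\<^sub>P\<close>\<close>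

definition det3 :: "'a::field vec3 \<Rightarrow> 'a vec3 \<Rightarrow> 'a vec3 \<Rightarrow> 'a" where
  "det3 a b c = dot a (cross b c)"

lemma det3_mult_det3:
  fixes x y z a b c :: "'a::field vec3"
  shows "det3 x y z * det3 a b c
    = dot x a * (dot y b * dot z c - dot y c * dot z b)
    - dot x b * (dot y a * dot z c - dot y c * dot z a)
    + dot x c * (dot y a * dot z b - dot y b * dot z a)"
  by (cases x; cases y; cases z; cases a; cases b; cases c) (simp add: det3_def algebra_simps)

lemma det3_cross_cross_cross:
  fixes a b c :: "'a::field vec3"
  shows "det3 (cross b c) (cross c a) (cross a b) = (det3 a b c)^2"
  by (cases a; cases b; cases c) (simp add: det3_def power2_eq_square algebra_simps)

lemma dot_cross_eq_det3: "dot c (cross a b) = det3 a b (c::'a::field vec3)"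
  by (cases a; cases b; cases c) (simp add: det3_def algebra_simps)

lemma cross_commute: "cross b a = scale3 (-1) (cross a (b::'a::field vec3))"
  by (cases a; cases b) (simp add: algebra_simps)

text \<open>Expansion of \<open>d \<times> a\<close>, \<open>d \<times> b\<close>, \<open>d \<times> c\<close> in the basis \<open>b \<times> c, c \<times> a, a \<times> b\<close>.\<close>

lemma scale3_det3_cross_1:
  fixes a b c d :: "'a::field vec3"
  shows "scale3 (det3 a b c) (cross d a) = lincomb (det3 a b d) (cross c a) (- det3 a d c) (cross a b)"
  by (cases a; cases b; cases c; cases d) (simp add: det3_def lincomb_def algebra_simps)

lemma scale3_det3_cross_2:
  fixes a b c d :: "'a::field vec3"
  shows "scale3 (det3 a b c) (cross d b) = lincomb (det3 d b c) (cross a b) (- det3 a b d) (cross b c)"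
  by (cases a; cases b; cases c; cases d) (simp add: det3_def lincomb_def algebra_simps)

lemma scale3_det3_cross_3:
  fixes a b c d :: "'a::field vec3"
  shows "scale3 (det3 a b c) (cross d c) = lincomb (det3 a d c) (cross b c) (- det3 d b c) (cross c a)"
  by (cases a; cases b; cases c; cases d) (simp add: det3_def lincomb_def algebra_simps)

context hermitian_field
begin

definition conj3 :: "'a vec3 \<Rightarrow> 'a vec3" where
  "conj3 v = (case v of (x,y,z) \<Rightarrow> (conj x, conj y, conj z))"

definition hform :: "'a vec3 \<Rightarrow> 'a vec3 \<Rightarrow> 'a" where
  "hform u v = dot u (conj3 v)"

lemma herm_eq_hform: "herm q v = hform v v"
  by (cases v) (simp add: herm_eq hform_def conj3_def fnorm_def)

lemma hform_commute: "hform v u = conj (hform u v)"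
  by (cases u; cases v) (simp add: hform_def conj3_def conj_add conj_mult mult.commute)

lemma herm_lincomb:
  "herm q (lincomb s u t v)
    = fnorm s * hform u u + fnorm t * hform v v + s * conj t * hform u v + t * conj s * hform v u"
  by (cases u; cases v)
    (simp add: herm_eq hform_def conj3_def lincomb_def fnorm_def conj_add conj_mult algebra_simps)

lemma conj_det3: "conj (det3 x y z) = det3 (conj3 x) (conj3 y) (conj3 z)"
  by (cases x; cases y; cases z) (simp add: det3_def conj3_def conj_add conj_mult conj_diff)

lemma fnorm_det3_isotropic:
  assumes "herm q x = 0" "herm q y = 0" "herm q z = 0"
  shows "fnorm (det3 x y z)
    = hform y z * hform z x * hform x y + hform z y * hform x z * hform y x"
  using assms det3_mult_det3[of x y z "conj3 x" "conj3 y" "conj3 z"]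
  by (simp add: fnorm_def conj_det3 herm_eq_hform hform_def[symmetric] algebra_simps)

lemma trace_zero_if_isotropic_lincomb:
  assumes "herm q (lincomb s u t v) = 0" "herm q u = 0" "herm q v = 0"
  shows "conj (s * conj t * hform u v) = - (s * conj t * hform u v)"
proof -
  have "s * conj t * hform u v + t * conj s * hform v u = 0"
    using assms herm_lincomb[of s u t v] by (simp add: herm_eq_hform)
  moreover have "conj (s * conj t * hform u v) = t * conj s * hform v u"
    by (simp add: conj_mult hform_commute[of v u] mult_ac)
  ultimately show ?thesis by (simp add: eq_neg_iff_add_eq_0 add.commute)
qed

text \<open>The three trace-zero conditions make \<open>P = hform y z * hform z x * hform x y\<close> satisfy
  \<open>P + conj P = 0\<close>, whereas \<open>P + conj P = fnorm (det3 x y z) \<noteq> 0\<close>.\<close>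

lemma no_isotropic_triangle_with_isotropic_sides:
  fixes x y z :: "'a vec3" and A B C :: 'a
  assumes iso: "herm q x = 0" "herm q y = 0" "herm q z = 0"
    and "det3 x y z \<noteq> 0" and "A \<noteq> 0" "B \<noteq> 0" "C \<noteq> 0"
    and D: "herm q (lincomb A y (-B) z) = 0"
    and E: "herm q (lincomb C z (-A) x) = 0"
    and F: "herm q (lincomb B x (-C) y) = 0"
  shows False
proof -
  define u where "u = A * conj (-B) * hform y z"
  define v where "v = C * conj (-A) * hform z x"
  define w where "w = B * conj (-C) * hform x y"
  have "conj u = - u" unfolding u_def by (rule trace_zero_if_isotropic_lincomb[OF D iso(2,3)])
  moreover have "conj v = - v" unfolding v_def by (rule trace_zero_if_isotropic_lincomb[OF E iso(3,1)])
  moreover have "conj w = - w" unfolding w_def by (rule trace_zero_if_isotropic_lincomb[OF F iso(1,2)])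
  ultimately have uvw: "conj (u * v * w) = - (u * v * w)" by (simp add: conj_mult)
  define N where "N = fnorm A * fnorm B * fnorm C"
  define P where "P = hform y z * hform z x * hform x y"
  have "N \<noteq> 0" using assms by (simp add: N_def)
  have "conj N = N" by (simp add: N_def conj_mult conj_fnorm)
  have "u * v * w = - (N * P)"
    by (simp add: u_def v_def w_def N_def P_def fnorm_def conj_minus algebra_simps)
  hence "- (N * conj P) = N * P"
    using uvw \<open>conj N = N\<close> by (simp add: conj_minus conj_mult)
  hence "N * (P + conj P) = 0" by (simp add: distrib_left neg_eq_iff_add_eq_0 add.commute)
  hence "P + conj P = 0" using \<open>N \<noteq> 0\<close> by simp
  moreover have "conj P = hform z y * hform x z * hform y x"
    by (simp add: P_def conj_mult hform_commute[of z y, symmetric] hform_commute[of x z, symmetric]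
        hform_commute[of y x, symmetric])
  ultimately have "fnorm (det3 x y z) = 0"
    using fnorm_det3_isotropic[OF iso] by (simp add: P_def mult_ac)
  thus False using \<open>det3 x y z \<noteq> 0\<close> by simp
qed

lemma herm_cross_commute: "herm q (cross b a) = herm q (cross a (b::'a vec3))"
  by (simp add: cross_commute[of b a] herm_scale3)

text \<open>If no determinant vanishes, \<open>d \<times> a\<close>, \<open>d \<times> b\<close>, \<open>d \<times> c\<close> are points on the three sides of the
  triangle \<open>b \<times> c, c \<times> a, a \<times> b\<close>, distinct from its vertices.\<close>

lemma det3_eq_0_if_isotropic_crosses:
  fixes a b c d :: "'a vec3"
  assumes "herm q (cross a b) = 0" "herm q (cross b c) = 0" "herm q (cross c a) = 0"
    and "herm q (cross d a) = 0" "herm q (cross d b) = 0" "herm q (cross d c) = 0"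
  shows "det3 a b c = 0 \<or> det3 a b d = 0 \<or> det3 a d c = 0 \<or> det3 d b c = 0"
proof (rule ccontr)
  assume "\<not> ?thesis"
  hence nz: "det3 a b c \<noteq> 0" "det3 a b d \<noteq> 0" "det3 a d c \<noteq> 0" "det3 d b c \<noteq> 0" by auto
  have "herm q (lincomb (det3 a b d) (cross c a) (- det3 a d c) (cross a b)) = 0"
    using assms(4) scale3_det3_cross_1[of a b c d] by (metis herm_scale3 mult_zero_right)
  moreover have "herm q (lincomb (det3 d b c) (cross a b) (- det3 a b d) (cross b c)) = 0"
    using assms(5) scale3_det3_cross_2[of a b c d] by (metis herm_scale3 mult_zero_right)
  moreover have "herm q (lincomb (det3 a d c) (cross b c) (- det3 d b c) (cross c a)) = 0"
    using assms(6) scale3_det3_cross_3[of a b c d] by (metis herm_scale3 mult_zero_right)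
  moreover have "det3 (cross b c) (cross c a) (cross a b) \<noteq> 0"
    using nz by (simp add: det3_cross_cross_cross)
  ultimately show False
    using no_isotropic_triangle_with_isotropic_sides assms(1-3) nz by blast
qed

lemma adjacent_perp:
  assumes "Hadj q (perp a) (perp b)" "(a::'a vec3) \<noteq> zero3" "b \<noteq> zero3"
  shows "herm q (cross a b) = 0" "perp a \<inter> perp b = span1 (cross a b)"
    "span1 (cross a b) \<in> unital q"
proof -
  have "perp a \<noteq> perp b" using assms(1) by (simp add: Hadj_def)
  hence "cross a b \<noteq> zero3" using perp_eq_perp_iff[OF assms(2,3)] by blast
  thus "perp a \<inter> perp b = span1 (cross a b)" by (rule perp_Int_perp)
  thus "span1 (cross a b) \<in> unital q" using assms(1) by (simp add: Hadj_def)
  thus "herm q (cross a b) = 0" using span1_in_unital_iff \<open>cross a b \<noteq> zero3\<close> by blast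
qed

lemma det3_ne_0_if_not_concurrent:
  assumes "Hadj q (perp a) (perp b)" "(a::'a vec3) \<noteq> zero3" "b \<noteq> zero3"
    and "\<not> (\<exists>P \<in> unital q. P \<subseteq> perp a \<and> P \<subseteq> perp b \<and> P \<subseteq> perp c)"
  shows "det3 a b c \<noteq> 0"
proof
  assume "det3 a b c = 0"
  hence "span1 (cross a b) \<subseteq> perp c"
    by (simp add: span1_subset_perp_iff dot_cross_eq_det3)
  thus False using adjacent_perp[OF assms(1-3)] assms(4) by blast
qed

lemma Hadj_commute: "Hadj q L M = Hadj q M L"
  by (auto simp: Hadj_def Int_commute)

theorem K4_in_clique:
  fixes A B C D :: "'a vec3 set"
  assumes "distinct [A, B, C, D]"
    and adj: "Hadj q A B" "Hadj q A C" "Hadj q A D" "Hadj q B C" "Hadj q B D" "Hadj q C D"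
  shows "\<exists>K \<in> cliqueFamily q. card ({A, B, C, D} \<inter> K) \<ge> 3"
proof (rule ccontr)
  assume no_clique: "\<not> ?thesis"
  have not_concurrent: "\<not> (\<exists>P \<in> unital q. P \<subseteq> X \<and> P \<subseteq> Y \<and> P \<subseteq> Z)"
    if "{X, Y, Z} \<subseteq> {A, B, C, D}" "card {X, Y, Z} = 3" for X Y Z
  proof
    assume "\<exists>P \<in> unital q. P \<subseteq> X \<and> P \<subseteq> Y \<and> P \<subseteq> Z"
    then obtain P where P: "P \<in> unital q" "P \<subseteq> X" "P \<subseteq> Y" "P \<subseteq> Z" by blast
    have "{X, Y, Z} \<subseteq> secants q" using that adj by (auto simp: Hadj_def)
    hence "{X, Y, Z} \<subseteq> {A, B, C, D} \<inter> clique_at q P" using that P by (auto simp: clique_at_def)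
    hence "card ({A, B, C, D} \<inter> clique_at q P) \<ge> 3" using that card_mono[of _ "{X, Y, Z}"] by fastforce
    thus False using no_clique P(1) by (auto simp: cliqueFamily_def)
  qed
  have "A \<in> secants q" "B \<in> secants q" "C \<in> secants q" "D \<in> secants q"
    using adj by (auto simp: Hadj_def)
  then obtain a b c d :: "'a vec3" where nz: "a \<noteq> zero3" "b \<noteq> zero3" "c \<noteq> zero3" "d \<noteq> zero3"
    and abcd: "A = perp a" "B = perp b" "C = perp c" "D = perp d"
    by (metis secantsE)
  note adj' = adj[unfolded abcd] adj(4-6)[unfolded abcd, THEN Hadj_commute[THEN iffD1]]
  have "herm q (cross a b) = 0" "herm q (cross b c) = 0" "herm q (cross c a) = 0"
    "herm q (cross d a) = 0" "herm q (cross d b) = 0" "herm q (cross d c) = 0"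
    using adjacent_perp(1) adj' nz herm_cross_commute by metis+
  moreover have "det3 a b c \<noteq> 0" "det3 a b d \<noteq> 0" "det3 a d c \<noteq> 0" "det3 d b c \<noteq> 0"
    using assms(1) adj' nz
    by (intro det3_ne_0_if_not_concurrent not_concurrent; auto simp: abcd card_insert_if)+
  ultimately show False using det3_eq_0_if_isotropic_crosses by blast
qed

end

theorem mainTheorem4:
  fixes q :: nat
  assumes "prime_power q"
    and "card (UNIV :: 'a::{field,finite} set) = q ^ 2"
  shows "card (secants q :: 'a vec3 set set) = q^2 * (q^2 - q + 1)
    \<and> q^2 * (q^2 - q + 1) = q^4 - q^3 + q^2
    \<and> (\<forall>L \<in> (secants q :: 'a vec3 set set). card {M. Hadj q L M} = (q + 1) * (q^2 - 1))
    \<and> (q + 1) * (q^2 - 1) = q^3 + q^2 - q - 1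
    \<and> card (cliqueFamily q :: 'a vec3 set set set) = q^3 + 1
    \<and> (\<forall>K \<in> (cliqueFamily q :: 'a vec3 set set set). is_maximal_clique q K \<and> card K = q^2)
    \<and> (\<forall>K1 \<in> (cliqueFamily q :: 'a vec3 set set set). \<forall>K2 \<in> cliqueFamily q.
          K1 \<noteq> K2 \<longrightarrow> card (K1 \<inter> K2) = 1)
    \<and> (\<forall>L \<in> (secants q :: 'a vec3 set set). card {K \<in> cliqueFamily q. L \<in> K} = q + 1)
    \<and> (\<forall>a b c d :: 'a vec3 set. distinct [a, b, c, d] \<and>
          Hadj q a b \<and> Hadj q a c \<and> Hadj q a d \<and> Hadj q b c \<and> Hadj q b d \<and> Hadj q c d
          \<longrightarrow> (\<exists>K \<in> cliqueFamily q. card ({a, b, c, d} \<inter> K) \<ge> 3))"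
proof -
  interpret hermitian_field q "TYPE('a)" by unfold_locales (use assms in auto)
  obtain r where "q = r + 2" using q_ge_2 by (metis add.commute le_Suc_ex)
  hence "q^2 * (q^2 - q + 1) = q^4 - q^3 + q^2" "(q + 1) * (q^2 - 1) = q^3 + q^2 - q - 1"
    by (simp_all add: power2_eq_square power3_eq_cube power4_eq_xxxx algebra_simps)
  moreover have "\<forall>K \<in> (cliqueFamily q :: 'a vec3 set set set). is_maximal_clique q K \<and> card K = q^2"
    using is_maximal_clique_clique_at card_clique_at by (auto simp: cliqueFamily_def)
  ultimately show ?thesis
    using card_secants card_adjacent card_cliqueFamily card_cliqueFamily_Int
      card_cliques_containing_secant K4_in_clique
    by blast
qed
end
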